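(* For every $n\in\mathbb{N}$, $\mathcal{SG}(\mathcal{P}_n)=\mathcal{SG}(\mathcal{O}_n)$, where $\mathcal{P}_n$ denotes Grim played on the path with $n$ vertices and $\mathcal{O}_n$ denotes the octal game Octal $.6$ played on a single heap of $n$ chips. That is, the Sprague–Grundy sequence of Grim on paths coincides with the Sprague–Grundy sequence of Octal $.6$.
   Context: Grim is a two-player game on a finite simple undirected graph: any isolated vertices are deleted before play begins (so $\mathcal{P}_1$ has no moves); a move consists of selecting a vertex of the current graph and deleting it together with its incident edges, after which every vertex that has become isolated is also deleted; the last player to move wins. Octal $.6$ is played on a collection of heaps of chips: a move consists of choosing a heap, removing exactly one chip from it, and leaving the remaining chips of that heap as exactly one or exactly two non-empty heaps (so a heap of size $1$ admits no move); the last player to move wins. For a position $X$ of an impartial game, with $\mathcal{F}(X)$ its set of positions reachable in one move, the Sprague–Grundy value is defined recursively by $\mathcal{SG}(X)=\mathrm{mex}\{\mathcal{SG}(Y):Y\in\mathcal{F}(X)\}$, where $\mathrm{mex}$ of a set of non-negative integers is the least non-negative integer not in the set. *)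

theory Defs
  imports Main "HOL-Library.Multiset"
begin

definition mex :: "nat set \<Rightarrow> nat" where
  "mex S = (LEAST k. k \<notin> S)"

text \<open>An impartial game is given by its move relation R: (Y, X) \<in> R iff Y is
  reachable from X in one move (so F(X) = {Y. (Y,X) \<in> R}).\<close>
definition SG :: "('p \<times> 'p) set \<Rightarrow> 'p \<Rightarrow> nat" where
  "SG R = wfrec R (\<lambda>f x. mex (f ` {y. (y, x) \<in> R}))"

text \<open>A graph is a pair (V, E) of a vertex set and a set of edges, each edge being
  a two-element set of vertices.\<close>
type_synonym graph = "nat set \<times> nat set set"

definition del_isolated :: "graph \<Rightarrow> graph" where
  "del_isolated G = ({u \<in> fst G. \<exists>e \<in> snd G. u \<in> e}, snd G)"

definition del_vertex :: "nat \<Rightarrow> graph \<Rightarrow> graph" where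
  "del_vertex v G = (fst G - {v}, {e \<in> snd G. v \<notin> e})"

definition grim_moves :: "graph \<Rightarrow> graph set" where
  "grim_moves G = {del_isolated (del_vertex v G) | v. v \<in> fst G}"

definition grim_rel :: "(graph \<times> graph) set" where
  "grim_rel = {(H, G). finite (fst G) \<and> H \<in> grim_moves G}"

definition path_graph :: "nat \<Rightarrow> graph" where
  "path_graph n = ({..<n}, {{i, Suc i} | i. Suc i < n})"

definition grim_path :: "nat \<Rightarrow> graph" where
  "grim_path n = del_isolated (path_graph n)"

text \<open>A position is a multiset of heap sizes.  A move removes one chip from a heap
  and leaves the rest as exactly one or exactly two non-empty heaps.\<close>
definition octal6_moves :: "nat multiset \<Rightarrow> nat multiset set" where
  "octal6_moves M =
     {M - {#h#} + {#a#} | h a. h \<in># M \<and> a \<ge> 1 \<and> a + 1 = h}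
   \<union> {M - {#h#} + {#a, b#} | h a b. h \<in># M \<and> a \<ge> 1 \<and> b \<ge> 1 \<and> a + b + 1 = h}"

definition octal6_rel :: "(nat multiset \<times> nat multiset) set" where
  "octal6_rel = {(N, M). N \<in> octal6_moves M}"

definition octal_heap :: "nat \<Rightarrow> nat multiset" where
  "octal_heap n = (if n = 0 then {#} else {#n#})"

end

theory Submission
  imports Defs
begin

text \<open>Every Grim position reachable from a path is a disjoint union of paths, i.e. the subgraph
  of the infinite path 0 - 1 - 2 - \<dots> induced by a union of pairwise non-adjacent intervals
  ("segments").  Deleting a vertex of a segment of length l splits it into segments of lengths
  a and b with a + b + 1 = l, and the subsequent deletion of isolated vertices removes
  exactly the segments of length 1 -- just as an Octal .6 move replaces a heap l by heaps a, b,
  where heaps of size 0 and 1 admit no moves.  Hence matching segments of length \<ge> 2 with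
  heaps of size \<ge> 2 is a bisimulation between the two move relations, and bisimilar positions
  have equal Sprague--Grundy values.\<close>

lemma SG_unfold:
  assumes "wf R"
  shows "SG R x = mex (SG R ` {y. (y, x) \<in> R})"
  unfolding SG_def by (subst wfrec[OF assms]) (simp add: cut_apply)

lemma SG_eq_if_bisimilar:
  assumes wf1: "wf R1" and wf2: "wf R2"
    and simulate_forth: "\<And>x y x'. B x y \<Longrightarrow> (x', x) \<in> R1 \<Longrightarrow> \<exists>y'. (y', y) \<in> R2 \<and> B x' y'"
    and simulate_back: "\<And>x y y'. B x y \<Longrightarrow> (y', y) \<in> R2 \<Longrightarrow> \<exists>x'. (x', x) \<in> R1 \<and> B x' y'"
    and "B x y"
  shows "SG R1 x = SG R2 y"
  using \<open>B x y\<close>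
proof (induction x arbitrary: y rule: wf_induct_rule[OF wf1])
  case (1 x)
  have "SG R1 ` {x'. (x', x) \<in> R1} = SG R2 ` {y'. (y', y) \<in> R2}"
  proof (intro equalityI subsetI)
    fix z assume "z \<in> SG R1 ` {x'. (x', x) \<in> R1}"
    then obtain x' where x': "(x', x) \<in> R1" "z = SG R1 x'" by auto
    obtain y' where "(y', y) \<in> R2" "B x' y'" using simulate_forth[OF "1.prems" x'(1)] by blast
    then show "z \<in> SG R2 ` {y'. (y', y) \<in> R2}" using "1.IH"[OF x'(1)] x'(2) by auto
  next
    fix z assume "z \<in> SG R2 ` {y'. (y', y) \<in> R2}"
    then obtain y' where y': "(y', y) \<in> R2" "z = SG R2 y'" by auto
    obtain x' where "(x', x) \<in> R1" "B x' y'" using simulate_back[OF "1.prems" y'(1)] by blast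
    then show "z \<in> SG R1 ` {x'. (x', x) \<in> R1}" using "1.IH" y'(2) by force
  qed
  then show ?case by (simp add: SG_unfold wf1 wf2)
qed

lemma wf_grim_rel: "wf grim_rel"
proof (rule wf_subset[OF wf_measure[of "\<lambda>G. card (fst G)"]])
  show "grim_rel \<subseteq> measure (\<lambda>G. card (fst G))"
  proof
    fix x assume "x \<in> grim_rel"
    then obtain H G v where x: "x = (H, G)" "finite (fst G)" "v \<in> fst G"
      and H: "H = del_isolated (del_vertex v G)"
      unfolding grim_rel_def grim_moves_def by blast
    have "fst H \<subset> fst G"
      using H x(3) by (auto simp: del_isolated_def del_vertex_def)
    then show "x \<in> measure (\<lambda>G. card (fst G))" using x by (simp add: psubset_card_mono)
  qed
qed

lemma sum_mset_octal6_moves_less: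
  assumes "N \<in> octal6_moves M"
  shows "sum_mset N < sum_mset M"
proof -
  from assms consider
      (one) h a where "h \<in># M" "a + 1 = h" "N = M - {#h#} + {#a#}"
    | (two) h a b where "h \<in># M" "a + b + 1 = h" "N = M - {#h#} + {#a, b#}"
    unfolding octal6_moves_def by blast
  then show ?thesis by cases (auto dest!: sum_mset.remove)
qed

lemma wf_octal6_rel: "wf octal6_rel"
  by (rule wf_subset[OF wf_measure[of sum_mset]])
    (auto simp: octal6_rel_def sum_mset_octal6_moves_less)

definition big_heaps :: "nat multiset \<Rightarrow> nat multiset" where
  "big_heaps M = filter_mset (\<lambda>h. 2 \<le> h) M"

lemma big_heaps_replace:
  "h \<in># M \<Longrightarrow> 2 \<le> h \<Longrightarrow> big_heaps (M - {#h#} + X) = big_heaps M - {#h#} + big_heaps X"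
  by (simp add: big_heaps_def)

lemma octal6_move_exists:
  assumes "h \<in># M" "a + b + 1 = h" "2 \<le> h"
  shows "\<exists>M'. (M', M) \<in> octal6_rel \<and> big_heaps M' = big_heaps M - {#h#} + big_heaps {#a, b#}"
proof (cases "a = 0 \<or> b = 0")
  case True
  define M' where "M' = M - {#h#} + {#h - 1#}"
  have "(M', M) \<in> octal6_rel"
    unfolding octal6_rel_def octal6_moves_def M'_def using assms by force
  moreover have "big_heaps M' = big_heaps M - {#h#} + big_heaps {#a, b#}"
    unfolding M'_def big_heaps_replace[OF assms(1,3)] using True assms
    by (auto simp: big_heaps_def)
  ultimately show ?thesis by blast
next
  case False
  define M' where "M' = M - {#h#} + {#a, b#}"
  have "(M', M) \<in> octal6_rel"
    unfolding octal6_rel_def octal6_moves_def M'_def using assms False by fastforce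
  then show ?thesis using big_heaps_replace[OF assms(1,3), of "{#a, b#}"] unfolding M'_def by blast
qed

lemma octal6_move_cases:
  assumes "(M', M) \<in> octal6_rel"
  obtains h a b where "h \<in># M" "a + b + 1 = h" "2 \<le> h"
    "big_heaps M' = big_heaps M - {#h#} + big_heaps {#a, b#}"
proof -
  from assms consider
      (one) h a where "h \<in># M" "1 \<le> a" "a + 1 = h" "M' = M - {#h#} + {#a#}"
    | (two) h a b where "h \<in># M" "1 \<le> a" "1 \<le> b" "a + b + 1 = h" "M' = M - {#h#} + {#a, b#}"
    unfolding octal6_rel_def octal6_moves_def by blast
  then show ?thesis
  proof cases
    case one
    then show ?thesis
      using that[of h a 0] big_heaps_replace[of h M "{#a#}"] by (simp add: big_heaps_def)
  next
    case two
    then show ?thesis using that[of h a b] big_heaps_replace[of h M "{#a, b#}"] by simp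
  qed
qed

definition path_induced :: "nat set \<Rightarrow> graph" where
  "path_induced V = (V, {{i, Suc i} | i. i \<in> V \<and> Suc i \<in> V})"

definition nonisolated :: "nat set \<Rightarrow> nat set" where
  "nonisolated V = {u \<in> V. (\<exists>w \<in> V. u = Suc w) \<or> Suc u \<in> V}"

lemma path_graph_eq_path_induced: "path_graph n = path_induced {..<n}"
  unfolding path_graph_def path_induced_def by auto

lemma del_vertex_path_induced: "del_vertex v (path_induced V) = path_induced (V - {v})"
  unfolding del_vertex_def path_induced_def by auto

lemma del_isolated_path_induced: "del_isolated (path_induced V) = path_induced (nonisolated V)"
  unfolding del_isolated_def path_induced_def nonisolated_def by auto

text \<open>Empty segments are apart from every segment: they arise when a segment is cut at
  one of its end vertices.\<close>

fun segment :: "nat \<times> nat \<Rightarrow> nat set" where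
  "segment (s, l) = {s..<s + l}"

fun segments_apart :: "nat \<times> nat \<Rightarrow> nat \<times> nat \<Rightarrow> bool" where
  "segments_apart (s, l) (t, m) \<longleftrightarrow> l = 0 \<or> m = 0 \<or> s + l < t \<or> t + m < s"

definition pairwise_apart :: "(nat \<times> nat) multiset \<Rightarrow> bool" where
  "pairwise_apart S \<longleftrightarrow> (\<forall>p \<in># S. \<forall>q \<in># S - {#p#}. segments_apart p q)"

definition segments_union :: "(nat \<times> nat) multiset \<Rightarrow> nat set" where
  "segments_union S = (\<Union>p \<in> set_mset S. segment p)"

abbreviation long_segment :: "nat \<times> nat \<Rightarrow> bool" where
  "long_segment p \<equiv> 2 \<le> snd p"

lemma segments_apart_sym: "segments_apart p q = segments_apart q p"
  by (cases p; cases q) auto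

lemma segments_apart_disjoint: "segments_apart p q \<Longrightarrow> x \<in> segment p \<Longrightarrow> x \<notin> segment q"
  by (cases p; cases q) auto

lemma segments_apart_subsegment:
  "segments_apart q (s, l) \<Longrightarrow> s \<le> s' \<Longrightarrow> s' + l' \<le> s + l \<Longrightarrow> segments_apart q (s', l')"
  by (cases q) auto

lemma pairwise_apart_empty [simp]: "pairwise_apart {#}"
  unfolding pairwise_apart_def by simp

lemma pairwise_apart_add_mset:
  "pairwise_apart (add_mset p S) \<longleftrightarrow> pairwise_apart S \<and> (\<forall>q \<in># S. segments_apart p q)"
proof
  assume *: "pairwise_apart (add_mset p S)"
  show "pairwise_apart S \<and> (\<forall>q \<in># S. segments_apart p q)"
    unfolding pairwise_apart_def
  proof (intro conjI ballI)
    fix q r assume "q \<in># S" "r \<in># S - {#q#}"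
    then have "q \<in># add_mset p S" "r \<in># add_mset p S - {#q#}"
      by (auto simp: in_diff_count)
    then show "segments_apart q r"
      using * unfolding pairwise_apart_def by blast
  next
    fix q assume "q \<in># S" then show "segments_apart p q"
      using * unfolding pairwise_apart_def by simp
  qed
next
  assume *: "pairwise_apart S \<and> (\<forall>q \<in># S. segments_apart p q)"
  show "pairwise_apart (add_mset p S)"
    unfolding pairwise_apart_def
  proof (intro ballI)
    fix q r assume q: "q \<in># add_mset p S" and r: "r \<in># add_mset p S - {#q#}"
    show "segments_apart q r"
    proof (cases "q = p")
      case True then show ?thesis using * r by simp
    next
      case False
      then have "q \<in># S" "r = p \<or> r \<in># S - {#q#}"
        using q r by (auto simp: diff_union_swap[symmetric])
      then show ?thesis using * segments_apart_sym unfolding pairwise_apart_def by blast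
    qed
  qed
qed

lemma pairwise_apart_filter: "pairwise_apart S \<Longrightarrow> pairwise_apart (filter_mset P S)"
  by (induction S) (auto simp: pairwise_apart_add_mset)

lemma segments_union_simps [simp]:
  "segments_union {#} = {}"
  "segments_union (add_mset p S) = segment p \<union> segments_union S"
  unfolding segments_union_def by auto

lemma finite_segments_union: "finite (segments_union S)"
  unfolding segments_union_def by auto

lemma nonisolated_segments_union:
  assumes apart: "pairwise_apart S"
  shows "nonisolated (segments_union S) = segments_union (filter_mset long_segment S)"
proof (intro equalityI subsetI)
  fix u assume "u \<in> segments_union (filter_mset long_segment S)"
  then obtain s l where seg: "(s, l) \<in># S" "2 \<le> l" "s \<le> u" "u < s + l"
    unfolding segments_union_def by auto
  have in_union: "x \<in> segments_union S" if "s \<le> x" "x < s + l" for x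
    using seg(1) that unfolding segments_union_def by force
  show "u \<in> nonisolated (segments_union S)"
  proof (cases "Suc u < s + l")
    case True
    then show ?thesis using in_union seg unfolding nonisolated_def by simp
  next
    case False
    then have "u = Suc (u - 1)" "s \<le> u - 1" using seg by auto
    then show ?thesis using in_union seg unfolding nonisolated_def
      by (intro CollectI conjI disjI1 bexI[of _ "u - 1"]) auto
  qed
next
  fix u assume u: "u \<in> nonisolated (segments_union S)"
  then have "u \<in> segments_union S" unfolding nonisolated_def by simp
  then obtain s l where seg: "(s, l) \<in># S" "s \<le> u" "u < s + l"
    unfolding segments_union_def by auto
  show "u \<in> segments_union (filter_mset long_segment S)"
  proof (cases "2 \<le> l")
    case True
    then show ?thesis using seg unfolding segments_union_def by force
  next
    case False
    then have l: "l = 1" "u = s" using seg by auto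
    from u obtain x where x: "x \<in> segments_union S" "x = Suc s \<or> Suc x = s"
      unfolding nonisolated_def l(2) by blast
    then obtain q where q: "q \<in># S" "x \<in> segment q"
      unfolding segments_union_def by auto
    have "x \<notin> segment (s, l)" using x(2) l(1) by auto
    then have "q \<in># S - {#(s, l)#}"
      using q by (auto simp: in_diff_count)
    then have "segments_apart (s, l) q"
      using apart seg(1) unfolding pairwise_apart_def by blast
    then show ?thesis using q x(2) l(1) by (cases q) auto
  qed
qed

lemma segments_cut:
  assumes apart: "pairwise_apart S" and p: "(s, l) \<in># S" and v: "s \<le> v" "v < s + l"
  defines "T \<equiv> add_mset (s, v - s) (add_mset (Suc v, s + l - Suc v) (S - {#(s, l)#}))"
  shows "segments_union S - {v} = segments_union T" and "pairwise_apart T"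
proof -
  have rest_apart: "pairwise_apart (S - {#(s, l)#})"
    and apart_p: "\<And>q. q \<in># S - {#(s, l)#} \<Longrightarrow> segments_apart (s, l) q"
    using pairwise_apart_add_mset[of "(s, l)" "S - {#(s, l)#}"] apart p by auto
  have "segments_union S = segment (s, l) \<union> segments_union (S - {#(s, l)#})"
    using p by (metis insert_DiffM segments_union_simps(2))
  moreover have "v \<notin> segments_union (S - {#(s, l)#})"
    using apart_p segments_apart_disjoint v unfolding segments_union_def by fastforce
  moreover have "segment (s, l) - {v} = segment (s, v - s) \<union> segment (Suc v, s + l - Suc v)"
    using v by auto
  ultimately show "segments_union S - {v} = segments_union T"
    unfolding T_def by auto
  have "segments_apart q (s, v - s) \<and> segments_apart q (Suc v, s + l - Suc v)"
    if "q \<in># S - {#(s, l)#}" for q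
    using apart_p[OF that] segments_apart_sym segments_apart_subsegment v by simp
  then show "pairwise_apart T"
    unfolding T_def pairwise_apart_add_mset using rest_apart v by (auto simp: segments_apart_sym)
qed

definition paths_heaps_corr :: "graph \<Rightarrow> nat multiset \<Rightarrow> bool" where
  "paths_heaps_corr G M \<longleftrightarrow> (\<exists>S. pairwise_apart S \<and> (\<forall>p \<in># S. long_segment p)
       \<and> G = path_induced (segments_union S) \<and> big_heaps M = image_mset snd S)"

lemma paths_heaps_corr_cut:
  assumes apart: "pairwise_apart S" and long: "\<forall>p \<in># S. long_segment p"
    and p: "(s, l) \<in># S" and v: "s \<le> v" "v < s + l"
    and M': "big_heaps M' = image_mset snd S - {#l#} + big_heaps {#v - s, s + l - Suc v#}"
  shows "paths_heaps_corr (del_isolated (del_vertex v (path_induced (segments_union S)))) M'"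
proof -
  define T where "T = add_mset (s, v - s) (add_mset (Suc v, s + l - Suc v) (S - {#(s, l)#}))"
  have cut: "segments_union S - {v} = segments_union T" "pairwise_apart T"
    using segments_cut[OF apart p v] unfolding T_def by auto
  have G': "del_isolated (del_vertex v (path_induced (segments_union S)))
      = path_induced (segments_union (filter_mset long_segment T))"
    by (simp add: del_vertex_path_induced del_isolated_path_induced cut nonisolated_segments_union)
  have "filter_mset long_segment (S - {#(s, l)#}) = S - {#(s, l)#}"
    using long by (metis filter_mset_cong0 filter_mset_True in_diffD)
  moreover have "image_mset snd (S - {#(s, l)#}) = image_mset snd S - {#l#}"
    using image_mset_Diff[of "{#(s, l)#}" S snd] p by simp
  ultimately have "big_heaps M' = image_mset snd (filter_mset long_segment T)"
    unfolding M' T_def by (simp add: big_heaps_def add.commute)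
  then show ?thesis
    unfolding paths_heaps_corr_def G'
    using pairwise_apart_filter[OF cut(2)] by (intro exI[of _ "filter_mset long_segment T"]) auto
qed

lemma paths_heaps_corr_forth:
  assumes corr: "paths_heaps_corr G M" and move: "(G', G) \<in> grim_rel"
  shows "\<exists>M'. (M', M) \<in> octal6_rel \<and> paths_heaps_corr G' M'"
proof -
  obtain S where S: "pairwise_apart S" "\<forall>p \<in># S. long_segment p"
    "G = path_induced (segments_union S)" "big_heaps M = image_mset snd S"
    using corr unfolding paths_heaps_corr_def by blast
  obtain v where v: "v \<in> segments_union S"
    and G': "G' = del_isolated (del_vertex v (path_induced (segments_union S)))"
    using move S(3) unfolding grim_rel_def grim_moves_def by (auto simp: path_induced_def)
  obtain s l where p: "(s, l) \<in># S" "s \<le> v" "v < s + l"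
    using v unfolding segments_union_def by auto
  have "l \<in># big_heaps M" "2 \<le> l" using S(2,4) p(1) by force+
  then obtain M' where "(M', M) \<in> octal6_rel"
    and "big_heaps M' = big_heaps M - {#l#} + big_heaps {#v - s, s + l - Suc v#}"
    using octal6_move_exists[of l M "v - s" "s + l - Suc v"] p by (auto simp: big_heaps_def)
  then show ?thesis
    using paths_heaps_corr_cut[OF S(1,2) p] S(4) G' by auto
qed

lemma paths_heaps_corr_back:
  assumes corr: "paths_heaps_corr G M" and move: "(M', M) \<in> octal6_rel"
  shows "\<exists>G'. (G', G) \<in> grim_rel \<and> paths_heaps_corr G' M'"
proof -
  obtain S where S: "pairwise_apart S" "\<forall>p \<in># S. long_segment p"
    "G = path_induced (segments_union S)" "big_heaps M = image_mset snd S"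
    using corr unfolding paths_heaps_corr_def by blast
  obtain h a b where h: "h \<in># M" "a + b + 1 = h" "2 \<le> h"
    and M': "big_heaps M' = big_heaps M - {#h#} + big_heaps {#a, b#}"
    using octal6_move_cases[OF move] .
  have "h \<in># image_mset snd S"
    using h unfolding S(4)[symmetric] by (simp add: big_heaps_def)
  then obtain s where p: "(s, h) \<in># S" by force
  have "s + a \<in> segments_union S"
    using p h unfolding segments_union_def by force
  then have "(del_isolated (del_vertex (s + a) G), G) \<in> grim_rel"
    using S(3) finite_segments_union
    unfolding grim_rel_def grim_moves_def by (auto simp: path_induced_def)
  moreover have "paths_heaps_corr (del_isolated (del_vertex (s + a) G)) M'"
    unfolding S(3) using h
    by (intro paths_heaps_corr_cut[OF S(1,2) p]) (auto simp: M' S(4))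
  ultimately show ?thesis by blast
qed

lemma paths_heaps_corr_start: "paths_heaps_corr (grim_path n) (octal_heap n)"
proof -
  have apart: "pairwise_apart {#(0, n)#}"
    by (simp add: pairwise_apart_add_mset)
  have "grim_path n = path_induced (segments_union (filter_mset long_segment {#(0, n)#}))"
    unfolding grim_path_def path_graph_eq_path_induced del_isolated_path_induced
    using nonisolated_segments_union[OF apart] by (simp add: lessThan_atLeast0)
  then show ?thesis
    unfolding paths_heaps_corr_def using apart pairwise_apart_filter[OF apart]
    by (intro exI[of _ "filter_mset long_segment {#(0, n)#}"])
      (auto simp: octal_heap_def big_heaps_def)
qed

theorem theorem5p4:
  fixes n :: nat
  shows "SG grim_rel (grim_path n) = SG octal6_rel (octal_heap n)"
  using wf_grim_rel wf_octal6_rel paths_heaps_corr_forth paths_heaps_corr_back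
    paths_heaps_corr_start
  by (rule SG_eq_if_bisimilar)

end
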